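(* For $0\le v\le 1$ and $a,b>0$, $$G(a,b)\le L\left(G_v(a,b),G_{1-v}(a,b)\right)\le L(a,b)$$ and $$G(a,b)\le G\left(L_v(a,b),L_{1-v}(a,b)\right)\le L(a,b).$$
   Context: For $x,y>0$: $G(x,y):=\sqrt{xy}$, $G_v(x,y):=x^{1-v}y^v$, and the logarithmic mean $L(x,y):=\frac{x-y}{\log x-\log y}$ for $x\neq y$, $L(x,x):=x$. For $0<v<1$ and $a\ne b$ the weighted logarithmic mean is $$L_v(a,b):=\frac{1}{\log a-\log b}\left(\frac{1-v}{v}(a-a^{1-v}b^v)+\frac{v}{1-v}(a^{1-v}b^v-b)\right),$$ with $L_v(a,a):=a$, and for the endpoint values (by continuity in $v$) $L_0(a,b):=a$, $L_1(a,b):=b$. *)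

theory Defs
  imports Complex_Main
begin

definition geo_mean :: "real \<Rightarrow> real \<Rightarrow> real" where
  "geo_mean x y = sqrt (x * y)"

definition wgeo_mean :: "real \<Rightarrow> real \<Rightarrow> real \<Rightarrow> real" where
  "wgeo_mean v x y = x powr (1 - v) * y powr v"

definition log_mean :: "real \<Rightarrow> real \<Rightarrow> real" where
  "log_mean x y = (if x = y then x else (x - y) / (ln x - ln y))"

definition wlog_mean :: "real \<Rightarrow> real \<Rightarrow> real \<Rightarrow> real" where
  "wlog_mean v a b =
    (if a = b then a
     else if v = 0 then a
     else if v = 1 then b
     else (1 / (ln a - ln b)) *
          ((1 - v) / v * (a - a powr (1 - v) * b powr v)
           + v / (1 - v) * (a powr (1 - v) * b powr v - b)))"

end

theory Submission
  imports Defs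
begin

(* Write a = exp (c + t), b = exp (c - t). The function sinhc x = sinh x / x is even, at least 1
   and increasing in |x|, and G(a,b) = exp c, L(a,b) = exp c * sinhc t,
   L(G_v, G_(1-v)) = exp c * sinhc ((1 - 2v) t); this gives the first chain. For the second, with
   A = sinhc (v t) and B = sinhc ((1 - v) t),
     L_v L_(1-v) = exp (2c) * ((1 - v)^2 A^2 + v^2 B^2 + 2 v (1 - v) cosh t A B),
   which is at least exp (2c) because A, B, cosh t >= 1. The addition theorem for sinh gives the
   same expression for (sinhc t)^2 with v and 1 - v exchanged in the squares, and the difference
   (2v - 1) (A^2 - B^2) is nonnegative by the monotonicity of sinhc. *)

definition sinhc :: "real \<Rightarrow> real" where
  "sinhc x = (if x = 0 then 1 else sinh x / x)"

lemma sinh_eq_mult_sinhc: "sinh x = x * sinhc x"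
  by (simp add: sinhc_def)

lemma sinhc_minus [simp]: "sinhc (- x) = sinhc x"
  by (simp add: sinhc_def)

lemma sinhc_abs [simp]: "sinhc \<bar>x\<bar> = sinhc x"
  by (simp add: abs_if)

lemma exp_add_minus_exp_diff: "exp (x + y) - exp (x - y) = 2 * y * exp x * sinhc y"
proof -
  have "exp (x + y) - exp (x - y) = 2 * exp x * sinh y"
    by (simp add: sinh_field_def exp_add exp_diff exp_minus field_simps)
  then show ?thesis
    by (simp add: sinh_eq_mult_sinhc)
qed

lemma sinhc_ge_one: "1 \<le> sinhc x"
proof -
  have "1 \<le> sinhc \<bar>x\<bar>"
    using real_le_x_sinh[of "\<bar>x\<bar>"] by (simp add: sinhc_def sinh_field_def exp_minus)
  then show ?thesis
    by simp
qed

lemma sinh_le_mult_cosh: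
  fixes x :: real
  assumes "0 \<le> x"
  shows "sinh x \<le> x * cosh x"
proof -
  have "0 * cosh 0 - sinh 0 \<le> x * cosh x - sinh x"
  proof (rule DERIV_nonneg_imp_nondecreasing[OF assms])
    fix z :: real
    assume "0 \<le> z"
    have "((\<lambda>z. z * cosh z - sinh z) has_real_derivative z * sinh z) (at z)"
      by (auto intro!: derivative_eq_intros)
    then show "\<exists>d. ((\<lambda>z. z * cosh z - sinh z) has_real_derivative d) (at z) \<and> 0 \<le> d"
      using \<open>0 \<le> z\<close> by auto
  qed
  then show ?thesis
    by simp
qed

lemma sinhc_mono:
  assumes "\<bar>x\<bar> \<le> \<bar>y\<bar>"
  shows "sinhc x \<le> sinhc y"
proof (cases "x = 0")
  case True
  then show ?thesis
    using sinhc_ge_one[of y] by (simp add: sinhc_def)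
next
  case False
  have "y \<noteq> 0"
    using False assms by auto
  have "sinh \<bar>x\<bar> / \<bar>x\<bar> \<le> sinh \<bar>y\<bar> / \<bar>y\<bar>"
  proof (rule DERIV_nonneg_imp_nondecreasing[OF assms])
    fix z :: real
    assume "\<bar>x\<bar> \<le> z"
    then have "0 < z"
      using False by linarith
    have "((\<lambda>z. sinh z / z) has_real_derivative (z * cosh z - sinh z) / z\<^sup>2) (at z)"
      using \<open>0 < z\<close> by (auto intro!: derivative_eq_intros simp: power2_eq_square field_simps)
    moreover have "0 \<le> (z * cosh z - sinh z) / z\<^sup>2"
      using sinh_le_mult_cosh[of z] \<open>0 < z\<close> by simp
    ultimately show "\<exists>d. ((\<lambda>z. sinh z / z) has_real_derivative d) (at z) \<and> 0 \<le> d"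
      by blast
  qed
  then have "sinhc \<bar>x\<bar> \<le> sinhc \<bar>y\<bar>"
    using False \<open>y \<noteq> 0\<close> by (simp add: sinhc_def)
  then show ?thesis
    by simp
qed

lemma sinh_add_squared:
  fixes x y :: real
  shows "sinh (x + y) ^ 2 = sinh x ^ 2 + sinh y ^ 2 + 2 * cosh (x + y) * sinh x * sinh y"
  unfolding sinh_add cosh_add using cosh_square_eq[of x] cosh_square_eq[of y] by algebra

lemma sinhc_squared_split:
  assumes "v + w = 1"
  shows "sinhc t ^ 2 = v\<^sup>2 * sinhc (v * t) ^ 2 + w\<^sup>2 * sinhc (w * t) ^ 2
           + 2 * v * w * cosh t * sinhc (v * t) * sinhc (w * t)"
proof (cases "t = 0")
  case True
  then show ?thesis
    using power2_sum[of v w] by (simp add: sinhc_def assms)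
next
  case False
  have t_split: "t = v * t + w * t"
    using assms by (simp flip: distrib_right)
  have "t\<^sup>2 * sinhc t ^ 2 = sinh t ^ 2"
    by (simp add: sinh_eq_mult_sinhc power_mult_distrib)
  also have "\<dots> = sinh (v * t) ^ 2 + sinh (w * t) ^ 2 + 2 * cosh t * sinh (v * t) * sinh (w * t)"
    by (metis t_split sinh_add_squared)
  also have "\<dots> = t\<^sup>2 * (v\<^sup>2 * sinhc (v * t) ^ 2 + w\<^sup>2 * sinhc (w * t) ^ 2
           + 2 * v * w * cosh t * sinhc (v * t) * sinhc (w * t))"
    by (simp add: sinh_eq_mult_sinhc power_mult_distrib power2_eq_square algebra_simps)
  finally show ?thesis
    using False by simp
qed

lemma geo_mean_exp: "geo_mean (exp (c + t)) (exp (c - t)) = exp c"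
  by (simp add: geo_mean_def exp_add exp_diff)

lemma log_mean_exp: "log_mean (exp (c + t)) (exp (c - t)) = exp c * sinhc t"
  by (simp add: log_mean_def exp_add_minus_exp_diff sinhc_def)

lemma wgeo_mean_exp: "wgeo_mean v (exp (c + t)) (exp (c - t)) = exp (c + (1 - 2 * v) * t)"
  by (simp add: wgeo_mean_def exp_powr_real algebra_simps flip: exp_add)

lemma wlog_mean_exp:
  assumes "0 \<le> v" and "v \<le> 1"
  shows "wlog_mean v (exp (c + t)) (exp (c - t))
           = exp c * ((1 - v) * exp ((1 - v) * t) * sinhc (v * t)
                      + v * exp (- (v * t)) * sinhc ((1 - v) * t))"
proof -
  consider "t = 0" | "v = 0" | "v = 1" | "t \<noteq> 0" "0 < v" "v < 1"
    using assms by fastforce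
  then show ?thesis
  proof cases
    case 4
    let ?a = "exp (c + t)" and ?b = "exp (c - t)" and ?g = "exp (c + (1 - 2 * v) * t)"
    have "?a - ?g = 2 * (v * t) * exp (c + (1 - v) * t) * sinhc (v * t)"
      using exp_add_minus_exp_diff[of "c + (1 - v) * t" "v * t"] by (simp add: algebra_simps)
    moreover have "?g - ?b = 2 * ((1 - v) * t) * exp (c - v * t) * sinhc ((1 - v) * t)"
      using exp_add_minus_exp_diff[of "c - v * t" "(1 - v) * t"] by (simp add: algebra_simps)
    moreover have "?a powr (1 - v) * ?b powr v = ?g"
      using wgeo_mean_exp[of v c t] by (simp add: wgeo_mean_def)
    moreover have "?a \<noteq> ?b" and "ln ?a - ln ?b = 2 * t"
      using 4 by auto
    ultimately have "wlog_mean v ?a ?b = 1 / (2 * t) * ((1 - v) / v * (2 * (v * t) * exp (c + (1 - v) * t) * sinhc (v * t))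
        + v / (1 - v) * (2 * ((1 - v) * t) * exp (c - v * t) * sinhc ((1 - v) * t)))"
      using 4 by (simp add: wlog_mean_def)
    also have "\<dots> = (1 - v) * exp (c + (1 - v) * t) * sinhc (v * t) + v * exp (c - v * t) * sinhc ((1 - v) * t)"
      using 4 by (simp add: field_simps)
    finally show ?thesis
      by (simp add: exp_add exp_diff exp_minus field_simps)
  qed (simp_all add: wlog_mean_def sinhc_def exp_add exp_diff exp_minus divide_inverse)
qed

lemma wlog_mean_mult_exp:
  assumes "0 \<le> v" and "v \<le> 1"
  shows "wlog_mean v (exp (c + t)) (exp (c - t)) * wlog_mean (1 - v) (exp (c + t)) (exp (c - t))
           = exp c ^ 2 * ((1 - v)\<^sup>2 * sinhc (v * t) ^ 2 + v\<^sup>2 * sinhc ((1 - v) * t) ^ 2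
                          + 2 * v * (1 - v) * cosh t * sinhc (v * t) * sinhc ((1 - v) * t))"
proof -
  define A B E F where "A = sinhc (v * t)" and "B = sinhc ((1 - v) * t)"
    and "E = exp (v * t)" and "F = exp ((1 - v) * t)"
  have "E > 0" "F > 0"
    by (simp_all add: E_def F_def)
  have "v * t + (1 - v) * t = t"
    by (simp add: algebra_simps)
  then have "E * F = exp t"
    unfolding E_def F_def by (simp flip: exp_add)
  then have cosh: "2 * cosh t = E * F + 1 / (E * F)"
    by (simp add: cosh_field_def exp_minus field_simps)
  have "wlog_mean v (exp (c + t)) (exp (c - t)) = exp c * ((1 - v) * F * A + v * B / E)"
    using wlog_mean_exp[OF assms, of c t] unfolding exp_minus
    unfolding A_def[symmetric] B_def[symmetric] E_def[symmetric] F_def[symmetric]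
    by (simp add: field_simps)
  moreover have "wlog_mean (1 - v) (exp (c + t)) (exp (c - t)) = exp c * (v * E * B + (1 - v) * A / F)"
    using wlog_mean_exp[of "1 - v" c t] assms
    unfolding diff_diff_eq2 add_diff_cancel_left' exp_minus
    unfolding A_def[symmetric] B_def[symmetric] E_def[symmetric] F_def[symmetric]
    by (simp add: field_simps)
  moreover have "((1 - v) * F * A + v * B / E) * (v * E * B + (1 - v) * A / F)
          = (1 - v)\<^sup>2 * A ^ 2 + v\<^sup>2 * B ^ 2 + v * (1 - v) * (E * F + 1 / (E * F)) * A * B"
    using \<open>E > 0\<close> \<open>F > 0\<close> by (simp add: field_simps power2_eq_square)
  ultimately show ?thesis
    by (simp add: power2_eq_square flip: A_def B_def cosh)
qed

lemma sinhc_weighted_product_bounds: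
  fixes v t :: real
  assumes "0 \<le> v" and "v \<le> 1"
  defines "Q \<equiv> (1 - v)\<^sup>2 * sinhc (v * t) ^ 2 + v\<^sup>2 * sinhc ((1 - v) * t) ^ 2
                 + 2 * v * (1 - v) * cosh t * sinhc (v * t) * sinhc ((1 - v) * t)"
  shows "1 \<le> Q" and "Q \<le> sinhc t ^ 2"
proof -
  let ?A = "sinhc (v * t)" and ?B = "sinhc ((1 - v) * t)"
  have "1 \<le> ?A" "1 \<le> ?B" "1 \<le> cosh t"
    by (simp_all add: sinhc_ge_one cosh_real_ge_1)
  then have "1 \<le> ?A ^ 2" "1 \<le> ?B ^ 2" "1 \<le> cosh t * ?A * ?B"
    by (simp_all add: one_le_power mult_ge1_I)
  then have "(1 - v)\<^sup>2 \<le> (1 - v)\<^sup>2 * ?A ^ 2" "v\<^sup>2 \<le> v\<^sup>2 * ?B ^ 2"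
    and "2 * v * (1 - v) \<le> 2 * v * (1 - v) * cosh t * ?A * ?B"
    using assms mult_left_mono[of 1 "cosh t * ?A * ?B" "2 * v * (1 - v)"]
    by (simp_all add: mult_le_cancel_left1 mult.assoc)
  moreover have "(1 - v)\<^sup>2 + v\<^sup>2 + 2 * v * (1 - v) = 1"
    by (simp add: power2_eq_square algebra_simps)
  ultimately show "1 \<le> Q"
    unfolding Q_def by linarith
  have "(v - (1 - v)) * (?A ^ 2 - ?B ^ 2) \<ge> 0"
  proof (cases "v \<le> 1 - v")
    case True
    then have "?A \<le> ?B"
      using assms by (intro sinhc_mono) (simp add: abs_mult mult_right_mono)
    then show ?thesis
      using True \<open>1 \<le> ?A\<close> by (intro mult_nonpos_nonpos) (simp_all add: power_mono)
  next
    case False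
    then have "?B \<le> ?A"
      using assms by (intro sinhc_mono) (simp add: abs_mult mult_right_mono)
    then show ?thesis
      using False \<open>1 \<le> ?B\<close> by (intro mult_nonneg_nonneg) (simp_all add: power_mono)
  qed
  moreover have "sinhc t ^ 2 - Q = (v - (1 - v)) * (?A ^ 2 - ?B ^ 2)"
    unfolding Q_def sinhc_squared_split[of v "1 - v" t, simplified]
    by (simp add: power2_eq_square algebra_simps)
  ultimately show "Q \<le> sinhc t ^ 2"
    by simp
qed

lemma log_mean_wgeo_mean_exp_bounds:
  assumes "0 \<le> v" and "v \<le> 1"
  shows "exp c \<le> log_mean (wgeo_mean v (exp (c + t)) (exp (c - t))) (wgeo_mean (1 - v) (exp (c + t)) (exp (c - t)))
         \<and> log_mean (wgeo_mean v (exp (c + t)) (exp (c - t))) (wgeo_mean (1 - v) (exp (c + t)) (exp (c - t)))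
             \<le> exp c * sinhc t"
proof -
  let ?s = "(1 - 2 * v) * t"
  have "log_mean (wgeo_mean v (exp (c + t)) (exp (c - t))) (wgeo_mean (1 - v) (exp (c + t)) (exp (c - t)))
          = exp c * sinhc ?s"
    unfolding wgeo_mean_exp by (simp add: algebra_simps flip: log_mean_exp)
  moreover have "\<bar>?s\<bar> \<le> \<bar>t\<bar>"
    using assms mult_right_mono[of "\<bar>1 - 2 * v\<bar>" 1 "\<bar>t\<bar>"] by (simp add: abs_mult)
  ultimately show ?thesis
    using sinhc_ge_one[of ?s] sinhc_mono[of ?s t] by simp
qed

lemma geo_mean_wlog_mean_exp_bounds:
  assumes "0 \<le> v" and "v \<le> 1"
  shows "exp c \<le> geo_mean (wlog_mean v (exp (c + t)) (exp (c - t))) (wlog_mean (1 - v) (exp (c + t)) (exp (c - t)))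
         \<and> geo_mean (wlog_mean v (exp (c + t)) (exp (c - t))) (wlog_mean (1 - v) (exp (c + t)) (exp (c - t)))
             \<le> exp c * sinhc t"
proof -
  let ?P = "wlog_mean v (exp (c + t)) (exp (c - t)) * wlog_mean (1 - v) (exp (c + t)) (exp (c - t))"
  have "exp c ^ 2 \<le> ?P" and "?P \<le> (exp c * sinhc t) ^ 2"
    using sinhc_weighted_product_bounds[OF assms, of t]
    unfolding wlog_mean_mult_exp[OF assms] power_mult_distrib by simp_all
  then have "sqrt (exp c ^ 2) \<le> sqrt ?P" and "sqrt ?P \<le> sqrt ((exp c * sinhc t) ^ 2)"
    by (simp_all only: real_sqrt_le_iff)
  then show ?thesis
    using sinhc_ge_one[of t] by (simp add: geo_mean_def)
qed

lemma exp_center_radius: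
  fixes a b :: real
  assumes "0 < a" and "0 < b"
  obtains c t where "a = exp (c + t)" and "b = exp (c - t)"
proof
  show "a = exp ((ln a + ln b) / 2 + (ln a - ln b) / 2)" and "b = exp ((ln a + ln b) / 2 - (ln a - ln b) / 2)"
    using assms by (simp_all add: field_simps)
qed

theorem theorem2p11:
  fixes a b v :: real
  assumes "0 \<le> v" and "v \<le> 1" and "0 < a" and "0 < b"
  shows "geo_mean a b \<le> log_mean (wgeo_mean v a b) (wgeo_mean (1 - v) a b)
         \<and> log_mean (wgeo_mean v a b) (wgeo_mean (1 - v) a b) \<le> log_mean a b
         \<and> geo_mean a b \<le> geo_mean (wlog_mean v a b) (wlog_mean (1 - v) a b)
         \<and> geo_mean (wlog_mean v a b) (wlog_mean (1 - v) a b) \<le> log_mean a b"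
proof -
  obtain c t where "a = exp (c + t)" and "b = exp (c - t)"
    using exp_center_radius[OF assms(3,4)] .
  then show ?thesis
    using log_mean_wgeo_mean_exp_bounds[OF assms(1,2), of c t]
      geo_mean_wlog_mean_exp_bounds[OF assms(1,2), of c t]
    by (simp add: geo_mean_exp log_mean_exp)
qed

end
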